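(* Let $\mathbb{U}\subseteq\mathbb{R}^{n_u}$ with positive Lebesgue measure, and let $\beta,\gamma\in\mathbb{R}\setminus\{0\}$ with $\beta<\gamma$. (i) Let $g:\mathbb{U}\to\mathbb{R}$ be bounded below with $\int_{\mathbb{U}}\exp(\beta g(u))\,du<\infty$ and $\int_{\mathbb{U}}\exp(-(\gamma-\beta)g(u))\,du<\infty$. Then $$\frac{1}{\beta}\log\int_{\mathbb{U}}\exp(\beta g(u))\,du=\inf_{\rho\in L^{1-\frac{\gamma}{\gamma-\beta}}(\mathbb{U})}\Big\{\frac{1}{\gamma}\log\int_{\mathbb{U}}\exp(\gamma g(u))\rho(u)\,du-\frac{1}{\gamma-\beta}\mathcal{H}_{1-\frac{\gamma}{\gamma-\beta}}(\rho)\Big\},$$ and the unique minimizer of the right-hand side is $\rho(u)=\exp(-(\gamma-\beta)g(u))/\int_{\mathbb{U}}\exp(-(\gamma-\beta)g(u'))\,du'$, $u\in\mathbb{U}$. (ii) Let $h:\mathbb{U}\to\mathbb{R}$ be bounded above with $\int_{\mathbb{U}}\exp(\gamma h(u))\,du<\infty$ and $\int_{\mathbb{U}}\exp((\gamma-\beta)h(u))\,du<\infty$. Then $$\frac{1}{\gamma}\log\int_{\mathbb{U}}\exp(\gamma h(u))\,du=\sup_{\rho\in L^{\frac{\gamma}{\gamma-\beta}}(\mathbb{U})}\Big\{\frac{1}{\beta}\log\int_{\mathbb{U}}\exp(\beta h(u))\rho(u)\,du+\frac{1}{\gamma-\beta}\mathcal{H}_{\frac{\gamma}{\gamma-\beta}}(\rho)\Big\},$$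 and the unique maximizer of the right-hand side is $\rho(u)=\exp((\gamma-\beta)h(u))/\int_{\mathbb{U}}\exp((\gamma-\beta)h(u'))\,du'$, $u\in\mathbb{U}$.
   Context: For a probability density $p$ on $\mathbb{U}$ and $\alpha\in\mathbb{R}\setminus\{0,1\}$ (including $\alpha<0$), the R\'enyi entropy is $\mathcal{H}_\alpha(p)=\frac{1}{\alpha(1-\alpha)}\log\int_{\{u:p(u)>0\}}p(u)^\alpha\,du$. For $\alpha\in\mathbb{R}\setminus\{0,1\}$, $L^{\alpha}(\mathbb{U})=\{\rho$ probability density on $\mathbb{U}:\int_{\mathbb{U}}\rho(u)^{\alpha}du<\infty\}$. *)

theory Defs
  imports "HOL-Analysis.Analysis"
begin

definition elog :: "ennreal \<Rightarrow> ereal" where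
  "elog x = (if x = \<infinity> then \<infinity> else if x = 0 then -\<infinity> else ereal (ln (enn2real x)))"

definition prob_density_on :: "'a::euclidean_space set \<Rightarrow> ('a \<Rightarrow> real) \<Rightarrow> bool" where
  "prob_density_on U \<rho> \<longleftrightarrow>
     \<rho> \<in> borel_measurable (lebesgue_on U) \<and> (\<forall>u\<in>U. 0 \<le> \<rho> u) \<and>
     (\<integral>\<^sup>+ u. ennreal (\<rho> u) \<partial>lebesgue_on U) = 1"

definition epow :: "real \<Rightarrow> real \<Rightarrow> ennreal" where
  "epow a x = (if x = 0 then (if a < 0 then \<infinity> else 0) else ennreal (x powr a))"

definition L_alpha :: "'a::euclidean_space set \<Rightarrow> real \<Rightarrow> ('a \<Rightarrow> real) set" where
  "L_alpha U a = {\<rho>. prob_density_on U \<rho> \<and> (\<integral>\<^sup>+ u. epow a (\<rho> u) \<partial>lebesgue_on U) < \<infinity>}"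

definition renyi_entropy :: "'a::euclidean_space set \<Rightarrow> real \<Rightarrow> ('a \<Rightarrow> real) \<Rightarrow> real" where
  "renyi_entropy U a p =
     1 / (a * (1 - a)) *
     ln (enn2real (\<integral>\<^sup>+ u. indicator {v. p v > 0} u * ennreal (p u powr a) \<partial>lebesgue_on U))"

end

theory Submission
  imports Defs
begin

text \<open>
  Write \<open>\<delta> = \<gamma> - \<beta> > 0\<close> and \<open>\<alpha> = 1 - \<gamma> / \<delta> = - \<beta> / \<delta>\<close>. For a density \<open>\<rho>\<close>, the
  functions \<open>exp (\<beta> g)\<close>, \<open>exp (\<gamma> g) \<rho>\<close> and \<open>\<rho> powr \<alpha>\<close> satisfy
  \<open>exp (\<beta> g) powr \<gamma> = (exp (\<gamma> g) \<rho>) powr \<beta> * (\<rho> powr \<alpha>) powr \<delta>\<close> with \<open>\<gamma> = \<beta> + \<delta>\<close>.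
  Whatever the signs of \<open>\<beta> < \<gamma>\<close>, one of the three is therefore a weighted geometric mean
  of the other two, and Hoelder's inequality compares the logarithms of their integrals
  \<open>Z\<close>, \<open>A \<rho>\<close>, \<open>B \<rho>\<close>. In each of the three sign regimes the comparison says exactly that
  the objective is at least \<open>ln Z / \<beta>\<close>, with equality iff Hoelder's inequality is sharp,
  i.e. iff \<open>\<rho>\<close> is proportional to \<open>exp (- \<delta> g)\<close>; normalisation then forces \<open>\<rho> = \<rho>\<^sub>0\<close>.
  Part (ii) is part (i) for \<open>- h\<close>, with \<open>(\<beta>, \<gamma>)\<close> replaced by \<open>(- \<gamma>, - \<beta>)\<close>.
\<close>

lemma weighted_geometric_mean_le:
  fixes t u v :: real
  assumes t: "0 < t" "t < 1" and uv: "0 \<le> u" "0 \<le> v"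
  shows "u powr t * v powr (1 - t) \<le> t * u + (1 - t) * v"
    and "u powr t * v powr (1 - t) = t * u + (1 - t) * v \<Longrightarrow> u = v"
proof -
  define m where "m = t * u + (1 - t) * v"
  have "u powr t * v powr (1 - t) \<le> m \<and> (u powr t * v powr (1 - t) = m \<longrightarrow> u = v)"
  proof (cases "u = 0 \<or> v = 0")
    case True
    then show ?thesis using t uv by (auto simp: m_def)
  next
    case False
    then have u: "0 < u" and v: "0 < v" using uv by auto
    have m: "0 < m" using t u v by (simp add: m_def add_pos_pos)
    \<comment> \<open>\<open>ln x \<le> x - 1\<close> at \<open>u / m\<close> and \<open>v / m\<close>, averaged with weights \<open>t\<close> and \<open>1 - t\<close>\<close>
    define gap where "gap x = (x / m - 1) - (ln x - ln m)" for x
    have gap_nonneg: "0 \<le> gap x" if "0 < x" for x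
      using ln_le_minus_one[of "x / m"] that m by (simp add: gap_def ln_div)
    have "t * (u / m) + (1 - t) * (v / m) = 1"
      using m by (simp add: m_def add_divide_distrib[symmetric])
    then have gap_sum: "t * gap u + (1 - t) * gap v = ln m - (t * ln u + (1 - t) * ln v)"
      by (simp add: gap_def algebra_simps)
    have gaps: "0 \<le> t * gap u" "0 \<le> (1 - t) * gap v"
      using t gap_nonneg u v by simp_all
    have geo: "u powr t * v powr (1 - t) = exp (t * ln u + (1 - t) * ln v)"
      using u v by (simp add: powr_def exp_add)
    have le: "u powr t * v powr (1 - t) \<le> m"
      unfolding geo using gap_sum gaps m by (simp flip: ln_ge_iff)
    have eq: "gap u = 0 \<and> gap v = 0" if "u powr t * v powr (1 - t) = m"
    proof -
      have "t * ln u + (1 - t) * ln v = ln m" using that m unfolding geo by auto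
      then have "t * gap u = 0" "(1 - t) * gap v = 0" using gap_sum gaps by linarith+
      then show ?thesis using t by simp
    qed
    have "gap x = 0 \<Longrightarrow> 0 < x \<Longrightarrow> x = m" for x
      using ln_eq_minus_one[of "x / m"] m by (simp add: gap_def ln_div)
    then show ?thesis using le eq u v by metis
  qed
  then show "u powr t * v powr (1 - t) \<le> t * u + (1 - t) * v"
    and "u powr t * v powr (1 - t) = t * u + (1 - t) * v \<Longrightarrow> u = v"
    by (simp_all add: m_def)
qed

lemma Holder_integral:
  fixes M :: "'m measure" and x y :: "'m \<Rightarrow> real" and t :: real
  assumes t: "0 < t" "t < 1"
    and x: "integrable M x" "\<And>w. w \<in> space M \<Longrightarrow> 0 \<le> x w"
    and y: "integrable M y" "\<And>w. w \<in> space M \<Longrightarrow> 0 \<le> y w"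
    and X: "0 < integral\<^sup>L M x" and Y: "0 < integral\<^sup>L M y"
  shows "(\<integral>w. x w powr t * y w powr (1 - t) \<partial>M) \<le> (integral\<^sup>L M x) powr t * (integral\<^sup>L M y) powr (1 - t)"
    and "(\<integral>w. x w powr t * y w powr (1 - t) \<partial>M) = (integral\<^sup>L M x) powr t * (integral\<^sup>L M y) powr (1 - t)
         \<Longrightarrow> AE w in M. x w / integral\<^sup>L M x = y w / integral\<^sup>L M y"
proof -
  define X where "X = integral\<^sup>L M x"
  define Y where "Y = integral\<^sup>L M y"
  define C where "C = X powr t * Y powr (1 - t)"
  define p where "p w = (x w / X) powr t * (y w / Y) powr (1 - t)" for w
  define q where "q w = t * (x w / X) + (1 - t) * (y w / Y)" for w
  have "X > 0" "Y > 0" "C > 0" using X Y by (simp_all add: X_def Y_def C_def)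
  have [measurable]: "x \<in> borel_measurable M" "y \<in> borel_measurable M" using x y by auto
  have p_le_q: "p w \<le> q w" if "w \<in> space M" for w
    unfolding p_def q_def using x y that \<open>X > 0\<close> \<open>Y > 0\<close>
    by (intro weighted_geometric_mean_le(1)[OF t]) auto
  have p_eq: "p w = x w powr t * y w powr (1 - t) / C" if "w \<in> space M" for w
    using x y that \<open>X > 0\<close> \<open>Y > 0\<close> by (simp add: p_def C_def powr_divide)
  have iq: "integrable M q" and int_q: "integral\<^sup>L M q = 1"
    unfolding q_def using x y \<open>X > 0\<close> \<open>Y > 0\<close> by (simp_all add: X_def Y_def)
  have ip: "integrable M p"
  proof (rule Bochner_Integration.integrable_bound[OF iq])
    show "p \<in> borel_measurable M" unfolding p_def by measurable
    show "AE w in M. norm (p w) \<le> norm (q w)"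
      using p_le_q by (intro AE_I2) (force simp: p_def intro: order_trans[OF _ abs_ge_self])
  qed
  have int_p: "integral\<^sup>L M p = (\<integral>w. x w powr t * y w powr (1 - t) \<partial>M) / C"
    by (simp add: Bochner_Integration.integral_cong[OF refl p_eq])
  have "integral\<^sup>L M p \<le> 1"
    using integral_mono[OF ip iq p_le_q] int_q by simp
  then show "(\<integral>w. x w powr t * y w powr (1 - t) \<partial>M) \<le> (integral\<^sup>L M x) powr t * (integral\<^sup>L M y) powr (1 - t)"
    using \<open>C > 0\<close> by (simp add: int_p C_def X_def Y_def)
  assume "(\<integral>w. x w powr t * y w powr (1 - t) \<partial>M) = (integral\<^sup>L M x) powr t * (integral\<^sup>L M y) powr (1 - t)"
  then have "integral\<^sup>L M (\<lambda>w. q w - p w) = 0"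
    using \<open>C > 0\<close> iq ip int_q X Y by (simp add: int_p C_def X_def Y_def)
  then have "AE w in M. q w - p w = 0"
    using p_le_q iq ip by (subst integral_nonneg_eq_0_iff_AE[symmetric]) auto
  then show "AE w in M. x w / integral\<^sup>L M x = y w / integral\<^sup>L M y"
  proof (rule AE_mp, intro AE_I2 impI)
    fix w assume "w \<in> space M" "q w - p w = 0"
    then show "x w / integral\<^sup>L M x = y w / integral\<^sup>L M y"
      using weighted_geometric_mean_le(2)[OF t, of "x w / X" "y w / Y"] x y \<open>X > 0\<close> \<open>Y > 0\<close>
      by (simp add: p_def q_def X_def Y_def)
  qed
qed

lemma Holder_ln_integral:
  fixes M :: "'m measure" and x y f :: "'m \<Rightarrow> real" and t :: real
  assumes t: "0 < t" "t < 1"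
    and x: "integrable M x" "\<And>w. w \<in> space M \<Longrightarrow> 0 \<le> x w"
    and y: "integrable M y" "\<And>w. w \<in> space M \<Longrightarrow> 0 \<le> y w"
    and X: "0 < integral\<^sup>L M x" and Y: "0 < integral\<^sup>L M y"
    and f: "integrable M f" "AE w in M. f w = x w powr t * y w powr (1 - t)"
    and F: "0 < integral\<^sup>L M f"
  shows "ln (integral\<^sup>L M f) \<le> t * ln (integral\<^sup>L M x) + (1 - t) * ln (integral\<^sup>L M y)"
    and "ln (integral\<^sup>L M f) = t * ln (integral\<^sup>L M x) + (1 - t) * ln (integral\<^sup>L M y)
         \<Longrightarrow> AE w in M. x w / integral\<^sup>L M x = y w / integral\<^sup>L M y"
proof -
  have [measurable]: "x \<in> borel_measurable M" "y \<in> borel_measurable M" "f \<in> borel_measurable M"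
    using x y f by auto
  have int_f: "integral\<^sup>L M f = (\<integral>w. x w powr t * y w powr (1 - t) \<partial>M)"
    using f(2) by (intro integral_cong_AE) auto
  have ln_bound: "ln ((integral\<^sup>L M x) powr t * (integral\<^sup>L M y) powr (1 - t))
      = t * ln (integral\<^sup>L M x) + (1 - t) * ln (integral\<^sup>L M y)"
    using X Y by (simp add: ln_mult ln_powr)
  note Holder = Holder_integral[OF t x y X Y, folded int_f]
  show "ln (integral\<^sup>L M f) \<le> t * ln (integral\<^sup>L M x) + (1 - t) * ln (integral\<^sup>L M y)"
    using Holder(1) F X Y by (simp flip: ln_bound)
  show "AE w in M. x w / integral\<^sup>L M x = y w / integral\<^sup>L M y"
    if "ln (integral\<^sup>L M f) = t * ln (integral\<^sup>L M x) + (1 - t) * ln (integral\<^sup>L M y)"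
    using that Holder(2) F X Y by (simp flip: ln_bound)
qed

lemma integral_pos_AE:
  fixes f :: "'m \<Rightarrow> real"
  assumes "0 < emeasure M (space M)" "integrable M f" "AE w in M. 0 < f w"
  shows "0 < integral\<^sup>L M f"
proof -
  have nonneg: "AE w in M. 0 \<le> f w" using assms(3) by eventually_elim simp
  have "integral\<^sup>L M f \<noteq> 0"
  proof
    assume "integral\<^sup>L M f = 0"
    then have "AE w in M. f w = 0" using integral_nonneg_eq_0_iff_AE[OF assms(2) nonneg] by simp
    with assms(3) have "AE w in M. False" by eventually_elim simp
    then show False using assms(1) ae_filter_eq_bot_iff[of M] by (simp add: trivial_limit_def)
  qed
  then show ?thesis using integral_nonneg_AE[OF nonneg] by simp
qed

lemma L_alpha_measurable: "\<rho> \<in> L_alpha U a \<Longrightarrow> \<rho> \<in> borel_measurable (lebesgue_on U)"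
  by (simp add: L_alpha_def prob_density_on_def)

lemma L_alpha_nonneg: "\<rho> \<in> L_alpha U a \<Longrightarrow> u \<in> U \<Longrightarrow> 0 \<le> \<rho> u"
  by (simp add: L_alpha_def prob_density_on_def)

lemma L_alpha_integrable: "\<rho> \<in> L_alpha U a \<Longrightarrow> integrable (lebesgue_on U) \<rho>"
  by (rule integrableI_nn_integral_finite[where x=1])
    (auto simp: L_alpha_def prob_density_on_def)

lemma L_alpha_integral: "\<rho> \<in> L_alpha U a \<Longrightarrow> integral\<^sup>L (lebesgue_on U) \<rho> = 1"
  by (rule integral_eq_nn_integral[THEN trans])
    (auto simp: L_alpha_def prob_density_on_def)

lemma L_alpha_pos_AE:
  assumes "\<rho> \<in> L_alpha U a" "a < 0"
  shows "AE u in lebesgue_on U. 0 < \<rho> u"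
proof -
  have [measurable]: "\<rho> \<in> borel_measurable (lebesgue_on U)" using assms(1) by (rule L_alpha_measurable)
  have "AE u in lebesgue_on U. epow a (\<rho> u) \<noteq> \<infinity>"
    using assms(1) by (intro nn_integral_PInf_AE) (auto simp: L_alpha_def epow_def less_top)
  then show ?thesis
    by (rule AE_mp) (intro AE_I2, use L_alpha_nonneg[OF assms(1)] assms(2) in \<open>auto simp: epow_def less_le\<close>)
qed

lemma L_alpha_integrable_powr:
  assumes "\<rho> \<in> L_alpha U a"
  shows "integrable (lebesgue_on U) (\<lambda>u. \<rho> u powr a)"
proof (rule integrableI_bounded)
  have [measurable]: "\<rho> \<in> borel_measurable (lebesgue_on U)" using assms by (rule L_alpha_measurable)
  show "(\<lambda>u. \<rho> u powr a) \<in> borel_measurable (lebesgue_on U)" by measurable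
  have "AE u in lebesgue_on U. epow a (\<rho> u) = ennreal (norm (\<rho> u powr a))"
  proof (cases "a < 0")
    case True
    from L_alpha_pos_AE[OF assms True] show ?thesis by eventually_elim (simp add: epow_def)
  qed (auto simp: epow_def)
  then have "(\<integral>\<^sup>+ u. ennreal (norm (\<rho> u powr a)) \<partial>lebesgue_on U) = (\<integral>\<^sup>+ u. epow a (\<rho> u) \<partial>lebesgue_on U)"
    by (intro nn_integral_cong_AE) (auto elim: AE_mp)
  then show "(\<integral>\<^sup>+ u. ennreal (norm (\<rho> u powr a)) \<partial>lebesgue_on U) < \<infinity>"
    using assms by (simp add: L_alpha_def)
qed

lemma L_alpha_integral_pos:
  fixes f :: "'a::euclidean_space \<Rightarrow> real"
  assumes "\<rho> \<in> L_alpha U a" "integrable (lebesgue_on U) f"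
    and "\<And>u. u \<in> U \<Longrightarrow> 0 \<le> f u" "\<And>u. u \<in> U \<Longrightarrow> f u = 0 \<Longrightarrow> \<rho> u = 0"
  shows "0 < integral\<^sup>L (lebesgue_on U) f"
proof -
  have [measurable]: "\<rho> \<in> borel_measurable (lebesgue_on U)" using assms(1) by (rule L_alpha_measurable)
  have nonneg: "AE u in lebesgue_on U. 0 \<le> f u"
    using assms(3) by (intro AE_I2) simp
  have "integral\<^sup>L (lebesgue_on U) f \<noteq> 0"
  proof
    assume "integral\<^sup>L (lebesgue_on U) f = 0"
    with nonneg have "AE u in lebesgue_on U. f u = 0"
      using integral_nonneg_eq_0_iff_AE[OF assms(2)] by simp
    then have "AE u in lebesgue_on U. \<rho> u = 0"
      by (rule AE_mp) (auto intro!: AE_I2 assms(4))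
    then have "integral\<^sup>L (lebesgue_on U) \<rho> = integral\<^sup>L (lebesgue_on U) (\<lambda>u. 0)"
      by (intro integral_cong_AE) auto
    then show False using L_alpha_integral[OF assms(1)] by simp
  qed
  then show ?thesis using integral_nonneg_AE[OF nonneg] by simp
qed

lemma renyi_entropy_eq_ln_integral:
  assumes "\<And>u. u \<in> U \<Longrightarrow> 0 \<le> p u" "integrable (lebesgue_on U) (\<lambda>u. p u powr a)"
  shows "renyi_entropy U a p = 1 / (a * (1 - a)) * ln (\<integral>u. p u powr a \<partial>lebesgue_on U)"
proof -
  have "(\<integral>\<^sup>+ u. indicator {v. p v > 0} u * ennreal (p u powr a) \<partial>lebesgue_on U)
      = (\<integral>\<^sup>+ u. ennreal (p u powr a) \<partial>lebesgue_on U)"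
    using assms(1) by (intro nn_integral_cong) (auto simp: indicator_def less_le)
  also have "\<dots> = ennreal (\<integral>u. p u powr a \<partial>lebesgue_on U)"
    by (rule nn_integral_eq_integral[OF assms(2)]) auto
  finally show ?thesis by (simp add: renyi_entropy_def)
qed

lemma L_alphaI:
  assumes "\<rho> \<in> borel_measurable (lebesgue_on U)" "\<And>u. u \<in> U \<Longrightarrow> 0 < \<rho> u"
    and "integrable (lebesgue_on U) \<rho>" "integral\<^sup>L (lebesgue_on U) \<rho> = 1"
    and "integrable (lebesgue_on U) (\<lambda>u. \<rho> u powr a)"
  shows "\<rho> \<in> L_alpha U a"
proof -
  have "AE u in lebesgue_on U. 0 \<le> \<rho> u"
    using assms(2) by (intro AE_I2) (simp add: less_imp_le)
  then have "(\<integral>\<^sup>+ u. ennreal (\<rho> u) \<partial>lebesgue_on U) = 1"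
    using nn_integral_eq_integral[OF assms(3)] assms(4) by simp
  moreover have "(\<integral>\<^sup>+ u. epow a (\<rho> u) \<partial>lebesgue_on U) = ennreal (\<integral>u. \<rho> u powr a \<partial>lebesgue_on U)"
    using assms(2) by (subst nn_integral_eq_integral[OF assms(5), symmetric])
      (auto intro!: nn_integral_cong simp: epow_def less_le)
  ultimately show ?thesis
    using assms(1,2) by (auto simp: L_alpha_def prob_density_on_def less_imp_le)
qed

lemma powr_eq_mult_exp_imp:
  fixes r c p q x :: real
  assumes "0 < r" "0 < c" "p \<noteq> 0" "r powr p = c * exp (q * x)"
  shows "r = c powr (1 / p) * exp (q / p * x)"
proof -
  have "r = (r powr p) powr (1 / p)" using assms(1,3) by (simp add: powr_powr)
  also have "\<dots> = c powr (1 / p) * exp (q / p * x)"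
    using assms(2,4) by (simp add: powr_mult exp_powr_real)
  finally show ?thesis .
qed

locale renyi_duality =
  fixes U :: "'a::euclidean_space set" and \<beta> \<gamma> :: real and g :: "'a \<Rightarrow> real"
  assumes U_meas: "U \<in> sets lebesgue" and U_pos: "0 < emeasure lebesgue U"
    and \<beta>_nz: "\<beta> \<noteq> 0" and \<gamma>_nz: "\<gamma> \<noteq> 0" and \<beta>_less_\<gamma>: "\<beta> < \<gamma>"
    and g_bounded_below: "\<exists>c. \<forall>u\<in>U. c \<le> g u"
    and integrable_exp_\<beta>: "integrable (lebesgue_on U) (\<lambda>u. exp (\<beta> * g u))"
    and integrable_exp_\<delta>: "integrable (lebesgue_on U) (\<lambda>u. exp (- (\<gamma> - \<beta>) * g u))"
begin

abbreviation \<delta> :: real where "\<delta> \<equiv> \<gamma> - \<beta>"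

definition \<alpha> :: real where "\<alpha> = 1 - \<gamma> / (\<gamma> - \<beta>)"

definition Z :: real where "Z = (\<integral>u. exp (\<beta> * g u) \<partial>lebesgue_on U)"

definition W :: real where "W = (\<integral>u. exp (- (\<gamma> - \<beta>) * g u) \<partial>lebesgue_on U)"

definition \<rho>\<^sub>0 :: "'a \<Rightarrow> real" where "\<rho>\<^sub>0 = (\<lambda>u. exp (- (\<gamma> - \<beta>) * g u) / W)"

definition A :: "('a \<Rightarrow> real) \<Rightarrow> real" where
  "A \<rho> = (\<integral>u. exp (\<gamma> * g u) * \<rho> u \<partial>lebesgue_on U)"

definition B :: "('a \<Rightarrow> real) \<Rightarrow> real" where "B \<rho> = (\<integral>u. \<rho> u powr \<alpha> \<partial>lebesgue_on U)"

definition F :: "('a \<Rightarrow> real) \<Rightarrow> ereal" where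
  "F \<rho> = ereal (1 / \<gamma>) * elog (\<integral>\<^sup>+ u. ennreal (exp (\<gamma> * g u) * \<rho> u) \<partial>lebesgue_on U)
          - ereal (1 / (\<gamma> - \<beta>) * renyi_entropy U \<alpha> \<rho>)"

definition holder_gap :: "('a \<Rightarrow> real) \<Rightarrow> real" where
  "holder_gap \<rho> = \<beta> * ln (A \<rho>) + \<delta> * ln (B \<rho>) - \<gamma> * ln Z"

definition proportional_to_gibbs :: "('a \<Rightarrow> real) \<Rightarrow> bool" where
  "proportional_to_gibbs \<rho> \<longleftrightarrow> (\<exists>K. AE u in lebesgue_on U. \<rho> u = K * exp (- \<delta> * g u))"

lemma \<delta>_pos: "0 < \<delta>"
  using \<beta>_less_\<gamma> by simp

lemma \<alpha>_eq: "\<alpha> = - \<beta> / \<delta>"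
  using \<delta>_pos by (simp add: \<alpha>_def field_simps)

lemma one_minus_\<alpha>: "1 - \<alpha> = \<gamma> / \<delta>"
  by (simp add: \<alpha>_def)

lemma \<alpha>_nz: "\<alpha> \<noteq> 0"
  using \<beta>_nz \<delta>_pos by (simp add: \<alpha>_eq)

lemma space_pos: "0 < emeasure (lebesgue_on U) (space (lebesgue_on U))"
  using U_pos U_meas by (simp add: emeasure_restrict_space)

lemma g_measurable [measurable]: "g \<in> borel_measurable (lebesgue_on U)"
proof -
  have "(\<lambda>u. ln (exp (\<beta> * g u)) / \<beta>) \<in> borel_measurable (lebesgue_on U)"
    using integrable_exp_\<beta> by measurable
  then show ?thesis using \<beta>_nz by simp
qed

lemma Z_pos: "0 < Z"
  unfolding Z_def by (rule integral_pos_AE[OF space_pos integrable_exp_\<beta>]) simp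

lemma W_pos: "0 < W"
  unfolding W_def by (rule integral_pos_AE[OF space_pos integrable_exp_\<delta>]) simp

lemma \<alpha>_mult_\<delta>: "\<alpha> * \<delta> = - \<beta>"
  using \<delta>_pos by (simp add: \<alpha>_eq)

lemma exp_\<beta>_geometric_mean:
  assumes "0 < r"
  shows "exp (\<beta> * x) = (exp (\<gamma> * x) * r) powr (\<beta> / \<gamma>) * (r powr \<alpha>) powr (\<delta> / \<gamma>)"
proof -
  have "(exp (\<gamma> * x) * r) powr (\<beta> / \<gamma>) * (r powr \<alpha>) powr (\<delta> / \<gamma>)
      = exp (\<gamma> * x * (\<beta> / \<gamma>)) * r powr ((\<beta> + \<alpha> * \<delta>) / \<gamma>)"
    using assms by (simp add: powr_mult powr_powr powr_add exp_powr_real add_divide_distrib)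
  then show ?thesis using assms \<gamma>_nz by (simp add: \<alpha>_mult_\<delta>)
qed

lemma powr_\<alpha>_geometric_mean:
  assumes "0 \<le> r"
  shows "r powr \<alpha> = exp (\<beta> * x) powr (\<gamma> / \<delta>) * (exp (\<gamma> * x) * r) powr \<alpha>"
proof -
  have "exp (\<beta> * x) powr (\<gamma> / \<delta>) * (exp (\<gamma> * x) * r) powr \<alpha>
      = exp (\<beta> * x * (\<gamma> / \<delta>) + \<gamma> * x * \<alpha>) * r powr \<alpha>"
    using assms by (simp add: powr_mult exp_powr_real flip: exp_add)
  moreover have "\<beta> * x * (\<gamma> / \<delta>) + \<gamma> * x * \<alpha> = 0"
    using \<delta>_pos by (simp add: \<alpha>_eq field_simps)
  ultimately show ?thesis by simp
qed

lemma exp_\<gamma>_mult_geometric_mean: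
  assumes "0 \<le> r"
  shows "exp (\<gamma> * x) * r = exp (\<beta> * x) powr (\<gamma> / \<beta>) * (r powr \<alpha>) powr (- \<delta> / \<beta>)"
proof -
  have "\<alpha> * (- \<delta> / \<beta>) = 1"
    using \<beta>_nz \<delta>_pos by (simp add: \<alpha>_eq field_simps)
  then show ?thesis using assms \<beta>_nz by (simp add: powr_powr exp_powr_real powr_one)
qed

context
  fixes \<rho> :: "'a \<Rightarrow> real"
  assumes \<rho>: "\<rho> \<in> L_alpha U \<alpha>"
begin

lemma \<rho>_measurable [measurable]: "\<rho> \<in> borel_measurable (lebesgue_on U)"
  using \<rho> by (rule L_alpha_measurable)

lemma A_integrand_nonneg: "u \<in> space (lebesgue_on U) \<Longrightarrow> 0 \<le> exp (\<gamma> * g u) * \<rho> u"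
  using L_alpha_nonneg[OF \<rho>] by simp

lemma B_pos: "0 < B \<rho>"
  unfolding B_def using \<rho> L_alpha_integrable_powr[OF \<rho>] by (rule L_alpha_integral_pos) simp_all

lemma renyi_term: "1 / (\<gamma> - \<beta>) * renyi_entropy U \<alpha> \<rho> = - \<delta> / (\<beta> * \<gamma>) * ln (B \<rho>)"
proof -
  have coeff: "1 / (\<gamma> - \<beta>) * (1 / (\<alpha> * (1 - \<alpha>))) = - \<delta> / (\<beta> * \<gamma>)"
    unfolding one_minus_\<alpha> by (subst \<alpha>_eq) (use \<delta>_pos \<beta>_nz \<gamma>_nz in \<open>simp add: field_simps\<close>)
  have "renyi_entropy U \<alpha> \<rho> = 1 / (\<alpha> * (1 - \<alpha>)) * ln (B \<rho>)"
    unfolding B_def using L_alpha_nonneg[OF \<rho>] L_alpha_integrable_powr[OF \<rho>]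
    by (rule renyi_entropy_eq_ln_integral)
  then show ?thesis by (simp only: mult.assoc[symmetric] coeff)
qed

lemma integrable_A_of_\<gamma>_neg:
  assumes "\<gamma> < 0"
  shows "integrable (lebesgue_on U) (\<lambda>u. exp (\<gamma> * g u) * \<rho> u)"
proof -
  obtain c where c: "\<And>u. u \<in> U \<Longrightarrow> c \<le> g u" using g_bounded_below by blast
  show ?thesis
  proof (rule Bochner_Integration.integrable_bound)
    show "integrable (lebesgue_on U) (\<lambda>u. exp (\<gamma> * c) * \<rho> u)"
      using L_alpha_integrable[OF \<rho>] by simp
    show "AE u in lebesgue_on U. norm (exp (\<gamma> * g u) * \<rho> u) \<le> norm (exp (\<gamma> * c) * \<rho> u)"
    proof (intro AE_I2)
      fix u assume "u \<in> space (lebesgue_on U)"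
      then have "exp (\<gamma> * g u) \<le> exp (\<gamma> * c)" "0 \<le> \<rho> u"
        using c assms L_alpha_nonneg[OF \<rho>] by (auto simp: mult_left_mono_neg)
      then show "norm (exp (\<gamma> * g u) * \<rho> u) \<le> norm (exp (\<gamma> * c) * \<rho> u)"
        by (simp add: abs_mult mult_right_mono)
    qed
  qed measurable
qed

lemma F_eq_infinity:
  assumes "\<not> integrable (lebesgue_on U) (\<lambda>u. exp (\<gamma> * g u) * \<rho> u)"
  shows "F \<rho> = \<infinity>"
proof -
  have "0 < \<gamma>" using integrable_A_of_\<gamma>_neg assms \<gamma>_nz by force
  have "(\<integral>\<^sup>+ u. ennreal (exp (\<gamma> * g u) * \<rho> u) \<partial>lebesgue_on U) = \<infinity>"
  proof (rule ccontr)
    have "(\<integral>\<^sup>+ u. ennreal (norm (exp (\<gamma> * g u) * \<rho> u)) \<partial>lebesgue_on U)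
        = (\<integral>\<^sup>+ u. ennreal (exp (\<gamma> * g u) * \<rho> u) \<partial>lebesgue_on U)"
      using L_alpha_nonneg[OF \<rho>] by (intro nn_integral_cong) simp
    moreover assume "(\<integral>\<^sup>+ u. ennreal (exp (\<gamma> * g u) * \<rho> u) \<partial>lebesgue_on U) \<noteq> \<infinity>"
    ultimately have "integrable (lebesgue_on U) (\<lambda>u. exp (\<gamma> * g u) * \<rho> u)"
      by (intro integrableI_bounded) (simp_all add: less_top)
    with assms show False ..
  qed
  then show ?thesis using \<open>0 < \<gamma>\<close> by (simp add: F_def elog_def)
qed

context
  assumes A_integrable: "integrable (lebesgue_on U) (\<lambda>u. exp (\<gamma> * g u) * \<rho> u)"
begin

lemma A_pos: "0 < A \<rho>"
  unfolding A_def using \<rho> A_integrable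
  by (rule L_alpha_integral_pos) (simp_all add: L_alpha_nonneg[OF \<rho>])

lemma F_eq_holder_gap: "F \<rho> = ereal (1 / \<beta> * ln Z + holder_gap \<rho> / (\<beta> * \<gamma>))"
proof -
  have "(\<integral>\<^sup>+ u. ennreal (exp (\<gamma> * g u) * \<rho> u) \<partial>lebesgue_on U) = ennreal (A \<rho>)"
    unfolding A_def using L_alpha_nonneg[OF \<rho>]
    by (intro nn_integral_eq_integral[OF A_integrable] AE_I2) simp
  moreover have "elog (ennreal (A \<rho>)) = ereal (ln (A \<rho>))"
    using A_pos by (simp add: elog_def)
  moreover have "1 / \<gamma> * ln (A \<rho>) - - \<delta> / (\<beta> * \<gamma>) * ln (B \<rho>)
      = 1 / \<beta> * ln Z + holder_gap \<rho> / (\<beta> * \<gamma>)"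
    using \<beta>_nz \<gamma>_nz by (simp add: holder_gap_def field_simps)
  ultimately show ?thesis
    unfolding F_def renyi_term by simp
qed

lemma proportional_to_gibbs_of_A_B:
  assumes "AE u in lebesgue_on U. 0 < \<rho> u"
    and "AE u in lebesgue_on U. exp (\<gamma> * g u) * \<rho> u / A \<rho> = \<rho> u powr \<alpha> / B \<rho>"
  shows "proportional_to_gibbs \<rho>"
proof -
  from assms have "AE u in lebesgue_on U. \<rho> u = (A \<rho> / B \<rho>) powr (1 / (1 - \<alpha>)) * exp (- \<delta> * g u)"
  proof eventually_elim
    case (elim u)
    have "\<rho> u powr (1 - \<alpha>) = \<rho> u / \<rho> u powr \<alpha>"
      using elim by (simp add: powr_diff powr_one)
    also have "\<dots> = A \<rho> / B \<rho> * exp (- \<gamma> * g u)"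
      using elim A_pos B_pos by (simp add: field_simps exp_minus)
    finally have "\<rho> u = (A \<rho> / B \<rho>) powr (1 / (1 - \<alpha>)) * exp (- \<gamma> / (1 - \<alpha>) * g u)"
      using elim A_pos B_pos \<gamma>_nz \<delta>_pos by (intro powr_eq_mult_exp_imp) (auto simp: one_minus_\<alpha>)
    then show ?case
      using \<gamma>_nz by (simp add: one_minus_\<alpha>)
  qed
  then show ?thesis unfolding proportional_to_gibbs_def ..
qed

lemma proportional_to_gibbs_of_Z_A:
  assumes "AE u in lebesgue_on U. exp (\<beta> * g u) / Z = exp (\<gamma> * g u) * \<rho> u / A \<rho>"
  shows "proportional_to_gibbs \<rho>"
proof -
  from assms have "AE u in lebesgue_on U. \<rho> u = A \<rho> / Z * exp (- \<delta> * g u)"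
  proof eventually_elim
    case (elim u)
    then have "\<rho> u = A \<rho> / Z * (exp (\<beta> * g u) / exp (\<gamma> * g u))"
      using Z_pos A_pos by (simp add: field_simps)
    also have "exp (\<beta> * g u) / exp (\<gamma> * g u) = exp (- \<delta> * g u)"
      by (simp add: exp_diff[symmetric] algebra_simps)
    finally show ?case .
  qed
  then show ?thesis unfolding proportional_to_gibbs_def ..
qed

lemma proportional_to_gibbs_of_Z_B:
  assumes "AE u in lebesgue_on U. exp (\<beta> * g u) / Z = \<rho> u powr \<alpha> / B \<rho>"
  shows "proportional_to_gibbs \<rho>"
proof -
  from assms have "AE u in lebesgue_on U. \<rho> u = (B \<rho> / Z) powr (1 / \<alpha>) * exp (- \<delta> * g u)"
  proof (rule AE_mp, intro AE_I2 impI)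
    fix u assume u: "u \<in> space (lebesgue_on U)" and e: "exp (\<beta> * g u) / Z = \<rho> u powr \<alpha> / B \<rho>"
    then have powr_eq: "\<rho> u powr \<alpha> = B \<rho> / Z * exp (\<beta> * g u)"
      using Z_pos B_pos by (simp add: field_simps)
    moreover have "0 \<le> \<rho> u" using u L_alpha_nonneg[OF \<rho>] by simp
    ultimately have "0 < \<rho> u"
      using Z_pos B_pos by (cases "\<rho> u = 0") auto
    then have "\<rho> u = (B \<rho> / Z) powr (1 / \<alpha>) * exp (\<beta> / \<alpha> * g u)"
      using powr_eq Z_pos B_pos \<alpha>_nz by (intro powr_eq_mult_exp_imp) auto
    then show "\<rho> u = (B \<rho> / Z) powr (1 / \<alpha>) * exp (- \<delta> * g u)"
      using \<beta>_nz \<delta>_pos by (simp add: \<alpha>_eq)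
  qed
  then show ?thesis unfolding proportional_to_gibbs_def ..
qed

lemma holder_gap_nonneg_pos:
  assumes "0 < \<beta>"
  shows "0 \<le> holder_gap \<rho>"
    and "holder_gap \<rho> = 0 \<Longrightarrow> proportional_to_gibbs \<rho>"
proof -
  have "0 < \<gamma>" using assms \<beta>_less_\<gamma> by simp
  have "\<alpha> < 0" using assms \<delta>_pos by (simp add: \<alpha>_eq)
  note \<rho>_pos = L_alpha_pos_AE[OF \<rho> this]
  define t where "t = \<beta> / \<gamma>"
  have t: "0 < t" "t < 1" using assms \<beta>_less_\<gamma> by (auto simp: t_def)
  have "\<gamma> * t = \<beta>" "\<gamma> * (1 - t) = \<delta>"
    using \<open>0 < \<gamma>\<close> by (simp_all add: t_def right_diff_distrib)
  then have gap: "holder_gap \<rho> = \<gamma> * (t * ln (A \<rho>) + (1 - t) * ln (B \<rho>) - ln Z)"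
    unfolding holder_gap_def by (simp only: right_diff_distrib distrib_left mult.assoc[symmetric])
  have one_minus_t: "1 - t = \<delta> / \<gamma>"
    using \<open>\<gamma> * (1 - t) = \<delta>\<close> \<open>0 < \<gamma>\<close> by (simp add: field_simps)
  have "AE u in lebesgue_on U.
      exp (\<beta> * g u) = (exp (\<gamma> * g u) * \<rho> u) powr t * (\<rho> u powr \<alpha>) powr (1 - t)"
    using \<rho>_pos unfolding one_minus_t unfolding t_def by eventually_elim (erule exp_\<beta>_geometric_mean)
  from Holder_ln_integral[OF t A_integrable A_integrand_nonneg L_alpha_integrable_powr[OF \<rho>]
      powr_ge_zero A_pos[unfolded A_def] B_pos[unfolded B_def] integrable_exp_\<beta> this
      Z_pos[unfolded Z_def]]
  have Holder: "ln Z \<le> t * ln (A \<rho>) + (1 - t) * ln (B \<rho>)"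
    "ln Z = t * ln (A \<rho>) + (1 - t) * ln (B \<rho>) \<Longrightarrow>
       AE u in lebesgue_on U. exp (\<gamma> * g u) * \<rho> u / A \<rho> = \<rho> u powr \<alpha> / B \<rho>"
    unfolding Z_def A_def B_def by simp_all
  show "0 \<le> holder_gap \<rho>"
    using Holder(1) \<open>0 < \<gamma>\<close> by (simp add: gap)
  assume "holder_gap \<rho> = 0"
  then have "ln Z = t * ln (A \<rho>) + (1 - t) * ln (B \<rho>)"
    using \<open>0 < \<gamma>\<close> by (simp add: gap)
  from \<rho>_pos Holder(2)[OF this] show "proportional_to_gibbs \<rho>"
    by (rule proportional_to_gibbs_of_A_B)
qed

lemma holder_gap_nonpos_mixed:
  assumes "\<beta> < 0" "0 < \<gamma>"
  shows "holder_gap \<rho> \<le> 0"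
    and "holder_gap \<rho> = 0 \<Longrightarrow> proportional_to_gibbs \<rho>"
proof -
  define t where "t = \<gamma> / \<delta>"
  have t: "0 < t" "t < 1" and one_minus_t: "1 - t = \<alpha>"
    using assms \<delta>_pos by (auto simp: t_def \<alpha>_def field_simps)
  have "\<delta> * t = \<gamma>" "\<delta> * (1 - t) = - \<beta>"
    using \<delta>_pos by (simp add: t_def, simp add: one_minus_t \<alpha>_eq)
  then have gap: "holder_gap \<rho> = \<delta> * (ln (B \<rho>) - (t * ln Z + (1 - t) * ln (A \<rho>)))"
    unfolding holder_gap_def by (simp only: right_diff_distrib distrib_left mult.assoc[symmetric])
  have "AE u in lebesgue_on U. \<rho> u powr \<alpha> = exp (\<beta> * g u) powr t * (exp (\<gamma> * g u) * \<rho> u) powr (1 - t)"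
    unfolding one_minus_t unfolding t_def using L_alpha_nonneg[OF \<rho>]
    by (intro AE_I2 powr_\<alpha>_geometric_mean) simp
  from Holder_ln_integral[OF t integrable_exp_\<beta> exp_ge_zero A_integrable A_integrand_nonneg
      Z_pos[unfolded Z_def] A_pos[unfolded A_def] L_alpha_integrable_powr[OF \<rho>] this
      B_pos[unfolded B_def]]
  have Holder: "ln (B \<rho>) \<le> t * ln Z + (1 - t) * ln (A \<rho>)"
    "ln (B \<rho>) = t * ln Z + (1 - t) * ln (A \<rho>) \<Longrightarrow>
       AE u in lebesgue_on U. exp (\<beta> * g u) / Z = exp (\<gamma> * g u) * \<rho> u / A \<rho>"
    unfolding Z_def A_def B_def by simp_all
  show "holder_gap \<rho> \<le> 0"
    using Holder(1) \<delta>_pos by (simp add: gap mult_nonneg_nonpos)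
  assume "holder_gap \<rho> = 0"
  then have "ln (B \<rho>) = t * ln Z + (1 - t) * ln (A \<rho>)"
    using \<delta>_pos by (simp add: gap)
  from Holder(2)[OF this] show "proportional_to_gibbs \<rho>"
    by (rule proportional_to_gibbs_of_Z_A)
qed

lemma holder_gap_nonneg_neg:
  assumes "\<gamma> < 0"
  shows "0 \<le> holder_gap \<rho>"
    and "holder_gap \<rho> = 0 \<Longrightarrow> proportional_to_gibbs \<rho>"
proof -
  have "\<beta> < 0" using assms \<beta>_less_\<gamma> by simp
  define t where "t = \<gamma> / \<beta>"
  have t: "0 < t" "t < 1" using assms \<beta>_less_\<gamma> by (auto simp: t_def field_simps)
  have "- \<beta> * t = - \<gamma>" "- \<beta> * (1 - t) = \<delta>"
    using \<open>\<beta> < 0\<close> by (simp_all add: t_def right_diff_distrib)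
  then have gap: "holder_gap \<rho> = - \<beta> * (t * ln Z + (1 - t) * ln (B \<rho>) - ln (A \<rho>))"
    unfolding holder_gap_def by (simp only: right_diff_distrib distrib_left mult.assoc[symmetric])
  have one_minus_t: "1 - t = - \<delta> / \<beta>"
    using \<open>- \<beta> * (1 - t) = \<delta>\<close> \<beta>_nz by (simp add: field_simps)
  have "AE u in lebesgue_on U.
      exp (\<gamma> * g u) * \<rho> u = exp (\<beta> * g u) powr t * (\<rho> u powr \<alpha>) powr (1 - t)"
    unfolding one_minus_t unfolding t_def using L_alpha_nonneg[OF \<rho>]
    by (intro AE_I2 exp_\<gamma>_mult_geometric_mean) simp
  from Holder_ln_integral[OF t integrable_exp_\<beta> exp_ge_zero L_alpha_integrable_powr[OF \<rho>]
      powr_ge_zero Z_pos[unfolded Z_def] B_pos[unfolded B_def] A_integrable this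
      A_pos[unfolded A_def]]
  have Holder: "ln (A \<rho>) \<le> t * ln Z + (1 - t) * ln (B \<rho>)"
    "ln (A \<rho>) = t * ln Z + (1 - t) * ln (B \<rho>) \<Longrightarrow>
       AE u in lebesgue_on U. exp (\<beta> * g u) / Z = \<rho> u powr \<alpha> / B \<rho>"
    unfolding Z_def A_def B_def by simp_all
  show "0 \<le> holder_gap \<rho>"
    using Holder(1) \<open>\<beta> < 0\<close> by (simp add: gap mult_nonpos_nonneg)
  assume "holder_gap \<rho> = 0"
  then have "ln (A \<rho>) = t * ln Z + (1 - t) * ln (B \<rho>)"
    using \<open>\<beta> < 0\<close> by (simp add: gap)
  from Holder(2)[OF this] show "proportional_to_gibbs \<rho>"
    by (rule proportional_to_gibbs_of_Z_B)
qed

lemma holder_gap_sign: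
  shows "0 \<le> \<beta> * \<gamma> * holder_gap \<rho>"
    and "holder_gap \<rho> = 0 \<Longrightarrow> proportional_to_gibbs \<rho>"
proof -
  consider "0 < \<beta>" | "\<beta> < 0" "0 < \<gamma>" | "\<gamma> < 0"
    using \<beta>_nz \<gamma>_nz \<beta>_less_\<gamma> by linarith
  then have "0 \<le> \<beta> * \<gamma> * holder_gap \<rho> \<and>
      (holder_gap \<rho> = 0 \<longrightarrow> proportional_to_gibbs \<rho>)"
  proof cases
    case 1
    then show ?thesis using holder_gap_nonneg_pos[OF 1] \<beta>_less_\<gamma> by simp
  next
    case 2
    then have "\<beta> * \<gamma> \<le> 0" by (simp add: mult_nonpos_nonneg)
    then show ?thesis using holder_gap_nonpos_mixed[OF 2] by (simp add: mult_nonpos_nonpos)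
  next
    case 3
    then have "0 \<le> \<beta> * \<gamma>" using \<beta>_less_\<gamma> by (simp add: mult_nonpos_nonpos)
    then show ?thesis using holder_gap_nonneg_neg[OF 3] by simp
  qed
  then show "0 \<le> \<beta> * \<gamma> * holder_gap \<rho>"
    and "holder_gap \<rho> = 0 \<Longrightarrow> proportional_to_gibbs \<rho>"
    by blast+
qed

end

lemma AE_eq_\<rho>\<^sub>0_of_proportional_to_gibbs:
  assumes "proportional_to_gibbs \<rho>"
  shows "AE u in lebesgue_on U. \<rho> u = \<rho>\<^sub>0 u"
proof -
  obtain K where K: "AE u in lebesgue_on U. \<rho> u = K * exp (- \<delta> * g u)"
    using assms unfolding proportional_to_gibbs_def ..
  then have "integral\<^sup>L (lebesgue_on U) \<rho> = (\<integral>u. K * exp (- \<delta> * g u) \<partial>lebesgue_on U)"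
    by (intro integral_cong_AE) auto
  then have "K = 1 / W"
    using L_alpha_integral[OF \<rho>] W_pos by (simp add: W_def field_simps)
  then show ?thesis using K by (simp add: \<rho>\<^sub>0_def)
qed

lemma value_le_F:
  shows "ereal (1 / \<beta> * ln Z) \<le> F \<rho>"
    and "F \<rho> = ereal (1 / \<beta> * ln Z) \<Longrightarrow> AE u in lebesgue_on U. \<rho> u = \<rho>\<^sub>0 u"
proof -
  have "ereal (1 / \<beta> * ln Z) \<le> F \<rho> \<and>
      (F \<rho> = ereal (1 / \<beta> * ln Z) \<longrightarrow> (AE u in lebesgue_on U. \<rho> u = \<rho>\<^sub>0 u))"
  proof (cases "integrable (lebesgue_on U) (\<lambda>u. exp (\<gamma> * g u) * \<rho> u)")
    case False
    then show ?thesis by (simp add: F_eq_infinity)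
  next
    case True
    have "holder_gap \<rho> / (\<beta> * \<gamma>) = \<beta> * \<gamma> * holder_gap \<rho> / (\<beta> * \<gamma>)\<^sup>2"
      using \<beta>_nz \<gamma>_nz by (simp add: power2_eq_square)
    then have "0 \<le> holder_gap \<rho> / (\<beta> * \<gamma>)"
      using holder_gap_sign(1)[OF True] by simp
    moreover have "holder_gap \<rho> = 0" if "holder_gap \<rho> / (\<beta> * \<gamma>) = 0"
      using that \<beta>_nz \<gamma>_nz by simp
    ultimately show ?thesis
      using holder_gap_sign(2)[OF True] AE_eq_\<rho>\<^sub>0_of_proportional_to_gibbs
      by (auto simp: F_eq_holder_gap[OF True])
  qed
  then show "ereal (1 / \<beta> * ln Z) \<le> F \<rho>"
    and "F \<rho> = ereal (1 / \<beta> * ln Z) \<Longrightarrow> AE u in lebesgue_on U. \<rho> u = \<rho>\<^sub>0 u"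
    by blast+
qed

end

lemma \<rho>\<^sub>0_pos: "0 < \<rho>\<^sub>0 u"
  using W_pos by (simp add: \<rho>\<^sub>0_def)

lemma \<rho>\<^sub>0_powr: "\<rho>\<^sub>0 u powr \<alpha> = exp (\<beta> * g u) / W powr \<alpha>"
proof -
  have "- \<delta> * g u * \<alpha> = \<beta> * g u" using \<delta>_pos by (simp add: \<alpha>_eq field_simps)
  then show ?thesis using W_pos by (simp add: \<rho>\<^sub>0_def powr_divide exp_powr_real)
qed

lemma A_integrand_\<rho>\<^sub>0: "exp (\<gamma> * g u) * \<rho>\<^sub>0 u = exp (\<beta> * g u) / W"
proof -
  have "exp (\<gamma> * g u) * exp (- \<delta> * g u) = exp (\<beta> * g u)"
    by (simp add: algebra_simps flip: exp_add)
  then show ?thesis by (simp add: \<rho>\<^sub>0_def)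
qed

lemma \<rho>\<^sub>0_in_L_alpha: "\<rho>\<^sub>0 \<in> L_alpha U \<alpha>"
proof (rule L_alphaI)
  show "\<rho>\<^sub>0 \<in> borel_measurable (lebesgue_on U)" unfolding \<rho>\<^sub>0_def by measurable
  show "integrable (lebesgue_on U) \<rho>\<^sub>0"
    unfolding \<rho>\<^sub>0_def using integrable_exp_\<delta> by simp
  show "integral\<^sup>L (lebesgue_on U) \<rho>\<^sub>0 = 1"
    unfolding \<rho>\<^sub>0_def using W_pos by (simp add: W_def)
  show "integrable (lebesgue_on U) (\<lambda>u. \<rho>\<^sub>0 u powr \<alpha>)"
    unfolding \<rho>\<^sub>0_powr using integrable_exp_\<beta> by simp
qed (rule \<rho>\<^sub>0_pos)

lemma F_\<rho>\<^sub>0: "F \<rho>\<^sub>0 = ereal (1 / \<beta> * ln Z)"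
proof -
  have integrable: "integrable (lebesgue_on U) (\<lambda>u. exp (\<gamma> * g u) * \<rho>\<^sub>0 u)"
    unfolding A_integrand_\<rho>\<^sub>0 using integrable_exp_\<beta> by simp
  have "A \<rho>\<^sub>0 = Z / W" by (simp add: A_def A_integrand_\<rho>\<^sub>0 Z_def)
  moreover have "B \<rho>\<^sub>0 = Z / W powr \<alpha>" by (simp add: B_def \<rho>\<^sub>0_powr Z_def)
  ultimately have "holder_gap \<rho>\<^sub>0 = (\<beta> + \<delta> - \<gamma>) * ln Z - (\<beta> + \<delta> * \<alpha>) * ln W"
    using Z_pos W_pos by (simp add: holder_gap_def ln_div ln_powr algebra_simps)
  also have "\<dots> = 0"
    using \<delta>_pos by (simp add: \<alpha>_eq)
  finally have "holder_gap \<rho>\<^sub>0 = 0" .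
  then show ?thesis by (simp add: F_eq_holder_gap[OF \<rho>\<^sub>0_in_L_alpha integrable])
qed

theorem variational_formula:
  shows "ereal (1 / \<beta> * ln Z) = (INF \<rho>\<in>L_alpha U \<alpha>. F \<rho>)"
    and "\<rho>\<^sub>0 \<in> L_alpha U \<alpha>" and "F \<rho>\<^sub>0 = ereal (1 / \<beta> * ln Z)"
    and "\<And>\<rho>. \<rho> \<in> L_alpha U \<alpha> \<Longrightarrow> F \<rho> = ereal (1 / \<beta> * ln Z) \<Longrightarrow>
           AE u in lebesgue_on U. \<rho> u = \<rho>\<^sub>0 u"
proof -
  show "ereal (1 / \<beta> * ln Z) = (INF \<rho>\<in>L_alpha U \<alpha>. F \<rho>)"
  proof (rule antisym)
    show "ereal (1 / \<beta> * ln Z) \<le> (INF \<rho>\<in>L_alpha U \<alpha>. F \<rho>)"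
      by (rule INF_greatest) (rule value_le_F(1))
    show "(INF \<rho>\<in>L_alpha U \<alpha>. F \<rho>) \<le> ereal (1 / \<beta> * ln Z)"
      using INF_lower[OF \<rho>\<^sub>0_in_L_alpha, of F] by (simp add: F_\<rho>\<^sub>0)
  qed
qed (use \<rho>\<^sub>0_in_L_alpha F_\<rho>\<^sub>0 value_le_F(2) in auto)

end

lemma ereal_uminus_mult_diff:
  fixes E :: ereal
  shows "- (ereal c * E - ereal r) = ereal (- c) * E + ereal r"
  by (cases E) auto

locale renyi_duality_sup =
  fixes U :: "'a::euclidean_space set" and \<beta> \<gamma> :: real and h :: "'a \<Rightarrow> real"
  assumes U_meas: "U \<in> sets lebesgue" and U_pos: "0 < emeasure lebesgue U"
    and \<beta>_nz: "\<beta> \<noteq> 0" and \<gamma>_nz: "\<gamma> \<noteq> 0" and \<beta>_less_\<gamma>: "\<beta> < \<gamma>"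
    and h_bounded_above: "\<exists>c. \<forall>u\<in>U. h u \<le> c"
    and integrable_exp_\<gamma>: "integrable (lebesgue_on U) (\<lambda>u. exp (\<gamma> * h u))"
    and integrable_exp_\<delta>: "integrable (lebesgue_on U) (\<lambda>u. exp ((\<gamma> - \<beta>) * h u))"

sublocale renyi_duality_sup \<subseteq> inf: renyi_duality U "- \<gamma>" "- \<beta>" "\<lambda>u. - h u"
proof
  show "\<exists>c. \<forall>u\<in>U. c \<le> - h u"
    using h_bounded_above by (metis neg_le_iff_le)
  show "integrable (lebesgue_on U) (\<lambda>u. exp (- (- \<beta> - - \<gamma>) * - h u))"
    using integrable_exp_\<delta> by (simp add: algebra_simps)
qed (use U_meas U_pos \<beta>_nz \<gamma>_nz \<beta>_less_\<gamma> integrable_exp_\<gamma> in auto)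

context renyi_duality_sup
begin

definition G :: "('a \<Rightarrow> real) \<Rightarrow> ereal" where
  "G \<rho> = ereal (1 / \<beta>) * elog (\<integral>\<^sup>+ u. ennreal (exp (\<beta> * h u) * \<rho> u) \<partial>lebesgue_on U)
          + ereal (1 / (\<gamma> - \<beta>) * renyi_entropy U (\<gamma> / (\<gamma> - \<beta>)) \<rho>)"

definition \<rho>\<^sub>0 :: "'a \<Rightarrow> real" where
  "\<rho>\<^sub>0 = (\<lambda>u. exp ((\<gamma> - \<beta>) * h u) / (\<integral>u'. exp ((\<gamma> - \<beta>) * h u') \<partial>lebesgue_on U))"

lemma inf_\<alpha>: "inf.\<alpha> = \<gamma> / (\<gamma> - \<beta>)"
  using \<beta>_less_\<gamma> by (simp add: inf.\<alpha>_def field_simps)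

lemma inf_\<rho>\<^sub>0: "inf.\<rho>\<^sub>0 = \<rho>\<^sub>0"
  by (simp add: inf.\<rho>\<^sub>0_def inf.W_def \<rho>\<^sub>0_def algebra_simps)

lemma G_eq_uminus_F: "G \<rho> = - inf.F \<rho>"
  by (simp add: G_def inf.F_def inf_\<alpha> ereal_uminus_mult_diff)

lemma inf_value: "1 / - \<gamma> * ln inf.Z = - (1 / \<gamma> * ln (\<integral>u. exp (\<gamma> * h u) \<partial>lebesgue_on U))"
  by (simp add: inf.Z_def)

theorem variational_formula_sup:
  defines "V \<equiv> 1 / \<gamma> * ln (\<integral>u. exp (\<gamma> * h u) \<partial>lebesgue_on U)"
  shows "ereal V = (SUP \<rho>\<in>L_alpha U (\<gamma> / (\<gamma> - \<beta>)). G \<rho>)"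
    and "\<rho>\<^sub>0 \<in> L_alpha U (\<gamma> / (\<gamma> - \<beta>))" and "G \<rho>\<^sub>0 = ereal V"
    and "\<And>\<rho>. \<rho> \<in> L_alpha U (\<gamma> / (\<gamma> - \<beta>)) \<Longrightarrow> G \<rho> = ereal V \<Longrightarrow>
           AE u in lebesgue_on U. \<rho> u = \<rho>\<^sub>0 u"
proof -
  note inf = inf.variational_formula[unfolded inf_\<alpha> inf_\<rho>\<^sub>0 inf_value, folded V_def]
  have G_eq_iff: "G \<rho> = ereal V \<longleftrightarrow> inf.F \<rho> = ereal (- V)" for \<rho>
    by (auto simp: G_eq_uminus_F ereal_uminus_eq_reorder)
  show "ereal V = (SUP \<rho>\<in>L_alpha U (\<gamma> / (\<gamma> - \<beta>)). G \<rho>)"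
    unfolding G_eq_uminus_F ereal_SUP_uminus_eq inf(1)[symmetric] by simp
  show "\<rho>\<^sub>0 \<in> L_alpha U (\<gamma> / (\<gamma> - \<beta>))" "G \<rho>\<^sub>0 = ereal V"
    using inf(2,3) G_eq_iff by auto
  show "AE u in lebesgue_on U. \<rho> u = \<rho>\<^sub>0 u"
    if "\<rho> \<in> L_alpha U (\<gamma> / (\<gamma> - \<beta>))" "G \<rho> = ereal V" for \<rho>
    using inf(4) that G_eq_iff by blast
qed

end

theorem lemma2:
  fixes U :: "'a::euclidean_space set"
    and \<beta> \<gamma> :: real
    and g h :: "'a \<Rightarrow> real"
  assumes U_meas: "U \<in> sets lebesgue"
    and U_pos: "emeasure lebesgue U > 0"
    and \<beta>_nz: "\<beta> \<noteq> 0" and \<gamma>_nz: "\<gamma> \<noteq> 0"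
    and \<beta>\<gamma>: "\<beta> < \<gamma>"
  shows
   "((\<exists>c. \<forall>u\<in>U. c \<le> g u) \<and>
     integrable (lebesgue_on U) (\<lambda>u. exp (\<beta> * g u)) \<and>
     integrable (lebesgue_on U) (\<lambda>u. exp (- (\<gamma> - \<beta>) * g u))
     \<longrightarrow>
     (let a = 1 - \<gamma> / (\<gamma> - \<beta>);
          F = (\<lambda>\<rho>. ereal (1 / \<gamma>) *
                     elog (\<integral>\<^sup>+ u. ennreal (exp (\<gamma> * g u) * \<rho> u) \<partial>lebesgue_on U)
                   - ereal (1 / (\<gamma> - \<beta>) * renyi_entropy U a \<rho>));
          V = 1 / \<beta> * ln (\<integral> u. exp (\<beta> * g u) \<partial>lebesgue_on U);
          \<rho>0 = (\<lambda>u. exp (- (\<gamma> - \<beta>) * g u) /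
                    (\<integral> u'. exp (- (\<gamma> - \<beta>) * g u') \<partial>lebesgue_on U))
      in ereal V = (INF \<rho>\<in>L_alpha U a. F \<rho>) \<and>
         \<rho>0 \<in> L_alpha U a \<and> F \<rho>0 = ereal V \<and>
         (\<forall>\<rho>\<in>L_alpha U a. F \<rho> = ereal V \<longrightarrow> (AE u in lebesgue_on U. \<rho> u = \<rho>0 u))))
    \<and>
    ((\<exists>c. \<forall>u\<in>U. h u \<le> c) \<and>
     integrable (lebesgue_on U) (\<lambda>u. exp (\<gamma> * h u)) \<and>
     integrable (lebesgue_on U) (\<lambda>u. exp ((\<gamma> - \<beta>) * h u))
     \<longrightarrow>
     (let a = \<gamma> / (\<gamma> - \<beta>);
          F = (\<lambda>\<rho>. ereal (1 / \<beta>) *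
                     elog (\<integral>\<^sup>+ u. ennreal (exp (\<beta> * h u) * \<rho> u) \<partial>lebesgue_on U)
                   + ereal (1 / (\<gamma> - \<beta>) * renyi_entropy U a \<rho>));
          V = 1 / \<gamma> * ln (\<integral> u. exp (\<gamma> * h u) \<partial>lebesgue_on U);
          \<rho>0 = (\<lambda>u. exp ((\<gamma> - \<beta>) * h u) /
                    (\<integral> u'. exp ((\<gamma> - \<beta>) * h u') \<partial>lebesgue_on U))
      in ereal V = (SUP \<rho>\<in>L_alpha U a. F \<rho>) \<and>
         \<rho>0 \<in> L_alpha U a \<and> F \<rho>0 = ereal V \<and>
         (\<forall>\<rho>\<in>L_alpha U a. F \<rho> = ereal V \<longrightarrow> (AE u in lebesgue_on U. \<rho> u = \<rho>0 u))))"
  apply (intro conjI impI; elim conjE)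
  subgoal premises g
  proof -
    interpret renyi_duality U \<beta> \<gamma> g using assms g by unfold_locales
    show ?thesis
      using variational_formula unfolding Let_def F_def \<alpha>_def \<rho>\<^sub>0_def W_def Z_def by blast
  qed
  subgoal premises h
  proof -
    interpret renyi_duality_sup U \<beta> \<gamma> h using assms h by unfold_locales
    show ?thesis
      using variational_formula_sup unfolding Let_def G_def \<rho>\<^sub>0_def by blast
  qed
  done

end
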